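(* Let $G=(m,n,\boldsymbol{c},\boldsymbol{d},r_{\max},r_{\min})$ be an interbank lending game with strategy space $\boldsymbol{S}$, and let $$\Phi(\boldsymbol{s})=\sum_{j\in B}\sum_{i\in L}\bigl(r_j(\boldsymbol{s},i)-r_{\min}\bigr)s_{ij},\qquad r_j(\boldsymbol{s},z)=(r_{\min}-r_{\max})\frac{\sum_{i=1}^{z}s_{ij}}{d_j}+r_{\max}.$$ Then $\Phi$ is strictly concave over $\boldsymbol{S}$.
   Context: An interbank lending game $G=(m,n,\boldsymbol{c},\boldsymbol{d},r_{\max},r_{\min})$ consists of positive integers $m,n$, budgets $\boldsymbol{c}\in\mathbb{R}_{>0}^m$, demands $\boldsymbol{d}\in\mathbb{R}_{>0}^n$ and reals $0<r_{\min}<r_{\max}$. Lenders are $L=\{1,\dots,m\}$, borrowers $B=\{1,\dots,n\}$. Lender $i$'s strategy set is $S_i=\{s_i\in\mathbb{R}_{\ge0}^n:\sum_{j\in B}s_{ij}\le c_i\}$ and the strategy space is $\boldsymbol{S}=\prod_{i\in L}S_i$, whose elements are $\boldsymbol{s}=(s_{ij})_{i\in L,j\in B}$. *)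

theory Defs
  imports "HOL-Analysis.Analysis"
begin

text \<open>A strategy profile s is represented as a function s i j (lender i, borrower j),
  with lenders indexed 1..m and borrowers 1..n; entries outside this range are 0.\<close>

definition strategy_space :: "nat \<Rightarrow> nat \<Rightarrow> (nat \<Rightarrow> real) \<Rightarrow> (nat \<Rightarrow> nat \<Rightarrow> real) set" where
  "strategy_space m n c =
     {s. (\<forall>i\<in>{1..m}. \<forall>j\<in>{1..n}. 0 \<le> s i j)
       \<and> (\<forall>i\<in>{1..m}. (\<Sum>j=1..n. s i j) \<le> c i)
       \<and> (\<forall>i j. i \<notin> {1..m} \<or> j \<notin> {1..n} \<longrightarrow> s i j = 0)}"

definition rate :: "(nat \<Rightarrow> real) \<Rightarrow> real \<Rightarrow> real \<Rightarrow> (nat \<Rightarrow> nat \<Rightarrow> real) \<Rightarrow> nat \<Rightarrow> nat \<Rightarrow> real" where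
  "rate d rmax rmin s j z = (rmin - rmax) * (\<Sum>i=1..z. s i j) / d j + rmax"

definition potential :: "nat \<Rightarrow> nat \<Rightarrow> (nat \<Rightarrow> real) \<Rightarrow> real \<Rightarrow> real \<Rightarrow> (nat \<Rightarrow> nat \<Rightarrow> real) \<Rightarrow> real" where
  "potential m n d rmax rmin s =
     (\<Sum>j=1..n. \<Sum>i=1..m. (rate d rmax rmin s j i - rmin) * s i j)"

definition strictly_concave_on :: "(nat \<Rightarrow> nat \<Rightarrow> real) set \<Rightarrow> ((nat \<Rightarrow> nat \<Rightarrow> real) \<Rightarrow> real) \<Rightarrow> bool" where
  "strictly_concave_on S f \<longleftrightarrow>
     (\<forall>s\<in>S. \<forall>t\<in>S. \<forall>u::real. 0 \<le> u \<and> u \<le> 1 \<longrightarrow> (\<lambda>i j. u * s i j + (1 - u) * t i j) \<in> S) \<and>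
     (\<forall>s\<in>S. \<forall>t\<in>S. s \<noteq> t \<longrightarrow> (\<forall>u::real. 0 < u \<and> u < 1 \<longrightarrow>
        f (\<lambda>i j. u * s i j + (1 - u) * t i j) > u * f s + (1 - u) * f t))"

end

theory Submission
  imports Defs
begin

text \<open>Write K = rmax - rmin. Column j of the potential equals
  K (x1 + ... + xm) - (K / d_j) Q(x), where xi = s_ij and
  Q(x) = sum over i of (x1 + ... + xi) xi. Since 2 Q(x) = (x1 + ... + xm)^2 + x1^2 + ... + xm^2,
  the form Q is positive definite. So the potential is linear minus a positive definite
  quadratic form, and its concavity gap at u s + (1 - u) t is u (1 - u) times a positive
  combination of the values of Q on the columns of s - t.\<close>

definition cumulative_form :: "nat \<Rightarrow> (nat \<Rightarrow> real) \<Rightarrow> real" where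
  "cumulative_form m x = (\<Sum>i=1..m. (\<Sum>k=1..i. x k) * x i)"

lemma two_cumulative_form:
  "2 * cumulative_form m x = (\<Sum>i=1..m. x i)\<^sup>2 + (\<Sum>i=1..m. (x i)\<^sup>2)"
proof (induction m)
  case 0
  then show ?case by (simp add: cumulative_form_def)
next
  case (Suc m)
  have "cumulative_form (Suc m) x = cumulative_form m x + (\<Sum>k=1..Suc m. x k) * x (Suc m)"
    by (simp add: cumulative_form_def)
  with Suc show ?case by (simp add: power2_eq_square algebra_simps)
qed

lemma cumulative_form_nonneg: "0 \<le> cumulative_form m x"
proof -
  have "0 \<le> (\<Sum>i=1..m. x i)\<^sup>2 + (\<Sum>i=1..m. (x i)\<^sup>2)"
    by (simp add: sum_nonneg)
  then show ?thesis
    using two_cumulative_form[of m x] by linarith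
qed

lemma cumulative_form_pos:
  assumes "i \<in> {1..m}" and "x i \<noteq> 0"
  shows "0 < cumulative_form m x"
proof -
  have "0 < (\<Sum>i=1..m. (x i)\<^sup>2)"
    using assms by (intro sum_pos2[where i = i]) auto
  then show ?thesis
    using two_cumulative_form[of m x] zero_le_power2[of "\<Sum>i=1..m. x i"] by linarith
qed

lemma cumulative_form_convex_comb:
  "cumulative_form m (\<lambda>i. u * x i + (1 - u) * y i) =
     u * cumulative_form m x + (1 - u) * cumulative_form m y
     - u * (1 - u) * cumulative_form m (\<lambda>i. x i - y i)"
proof -
  have "cumulative_form m (\<lambda>i. u * x i + (1 - u) * y i) =
      (\<Sum>i=1..m. \<Sum>k=1..i. u * (x k * x i) + (1 - u) * (y k * y i)
         - u * (1 - u) * ((x k - y k) * (x i - y i)))"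
    unfolding cumulative_form_def sum_distrib_right
    by (intro sum.cong refl) (simp add: algebra_simps)
  then show ?thesis
    unfolding cumulative_form_def sum_distrib_right
    by (simp add: sum_subtractf sum.distrib sum_distrib_left)
qed

lemma potential_eq:
  "potential m n d rmax rmin s =
     (\<Sum>j=1..n. (rmax - rmin) * (\<Sum>i=1..m. s i j)
        - (rmax - rmin) / d j * cumulative_form m (\<lambda>i. s i j))"
  unfolding potential_def
proof (intro sum.cong refl)
  fix j
  have "(rate d rmax rmin s j i - rmin) * s i j =
      (rmax - rmin) * s i j - (rmax - rmin) / d j * ((\<Sum>k=1..i. s k j) * s i j)" for i
    unfolding rate_def by (simp add: algebra_simps add_divide_distrib diff_divide_distrib)
  then show "(\<Sum>i=1..m. (rate d rmax rmin s j i - rmin) * s i j) =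
      (rmax - rmin) * (\<Sum>i=1..m. s i j) - (rmax - rmin) / d j * cumulative_form m (\<lambda>i. s i j)"
    unfolding cumulative_form_def by (simp add: sum_subtractf sum_distrib_left)
qed

lemma potential_concavity_gap:
  "potential m n d rmax rmin (\<lambda>i j. u * s i j + (1 - u) * t i j)
     - (u * potential m n d rmax rmin s + (1 - u) * potential m n d rmax rmin t) =
   u * (1 - u) * (\<Sum>j=1..n. (rmax - rmin) / d j * cumulative_form m (\<lambda>i. s i j - t i j))"
proof -
  have column_gap:
    "(K * (\<Sum>i=1..m. u * x i + (1 - u) * y i) - E * cumulative_form m (\<lambda>i. u * x i + (1 - u) * y i))
       - (u * (K * (\<Sum>i=1..m. x i) - E * cumulative_form m x)
          + (1 - u) * (K * (\<Sum>i=1..m. y i) - E * cumulative_form m y))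
     = u * (1 - u) * (E * cumulative_form m (\<lambda>i. x i - y i))" for K E :: real and x y
    unfolding cumulative_form_convex_comb sum.distrib sum_distrib_left[symmetric]
    by (simp add: algebra_simps)
  let ?col = "\<lambda>x j. (rmax - rmin) * (\<Sum>i=1..m. x i) - (rmax - rmin) / d j * cumulative_form m x"
  have "potential m n d rmax rmin (\<lambda>i j. u * s i j + (1 - u) * t i j)
      - (u * potential m n d rmax rmin s + (1 - u) * potential m n d rmax rmin t) =
      (\<Sum>j=1..n. ?col (\<lambda>i. u * s i j + (1 - u) * t i j) j
         - (u * ?col (\<lambda>i. s i j) j + (1 - u) * ?col (\<lambda>i. t i j) j))"
    unfolding potential_eq by (simp only: sum_distrib_left sum_subtractf[symmetric] sum.distrib[symmetric])
  also have "\<dots> = u * (1 - u) * (\<Sum>j=1..n. (rmax - rmin) / d j * cumulative_form m (\<lambda>i. s i j - t i j))"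
    unfolding column_gap by (simp add: sum_distrib_left)
  finally show ?thesis .
qed

lemma potential_strict_concavity_gap:
  assumes "\<forall>j\<in>{1..n}. 0 < d j" and "rmin < rmax"
    and i: "i \<in> {1..m}" and j: "j \<in> {1..n}" and "s i j \<noteq> t i j"
    and "0 < u" and "u < 1"
  shows "u * potential m n d rmax rmin s + (1 - u) * potential m n d rmax rmin t
    < potential m n d rmax rmin (\<lambda>i j. u * s i j + (1 - u) * t i j)"
proof -
  have weight_pos: "0 < (rmax - rmin) / d k" if "k \<in> {1..n}" for k
    using assms(1,2) that by simp
  have "0 < (\<Sum>k=1..n. (rmax - rmin) / d k * cumulative_form m (\<lambda>i. s i k - t i k))"
  proof (rule sum_pos2[where i = j])
    show "0 < (rmax - rmin) / d j * cumulative_form m (\<lambda>i. s i j - t i j)"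
      using \<open>s i j \<noteq> t i j\<close>
      by (intro mult_pos_pos weight_pos[OF j] cumulative_form_pos[OF i]) simp
  next
    show "0 \<le> (rmax - rmin) / d k * cumulative_form m (\<lambda>i. s i k - t i k)" if "k \<in> {1..n}" for k
      using weight_pos[OF that] by (intro mult_nonneg_nonneg cumulative_form_nonneg) simp
  qed (use j in auto)
  with \<open>0 < u\<close> \<open>u < 1\<close>
  have "0 < u * (1 - u) * (\<Sum>k=1..n. (rmax - rmin) / d k * cumulative_form m (\<lambda>i. s i k - t i k))"
    by simp
  then show ?thesis
    using potential_concavity_gap[of m n d rmax rmin u s t] by linarith
qed

lemma strategy_space_convex:
  assumes "s \<in> strategy_space m n c" and "t \<in> strategy_space m n c" and "0 \<le> u" and "u \<le> 1"
  shows "(\<lambda>i j. u * s i j + (1 - u) * t i j) \<in> strategy_space m n c"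
proof -
  have "(\<Sum>j=1..n. u * s i j + (1 - u) * t i j) \<le> c i" if "i \<in> {1..m}" for i
  proof -
    have "(\<Sum>j=1..n. u * s i j + (1 - u) * t i j)
        = u * (\<Sum>j=1..n. s i j) + (1 - u) * (\<Sum>j=1..n. t i j)"
      by (simp add: sum.distrib sum_distrib_left)
    also have "\<dots> \<le> u * c i + (1 - u) * c i"
      using assms that unfolding strategy_space_def by (intro add_mono mult_left_mono) auto
    finally show ?thesis by (simp add: algebra_simps)
  qed
  with assms show ?thesis
    unfolding strategy_space_def by auto
qed

lemma strategy_space_differ:
  assumes "s \<in> strategy_space m n c" and "t \<in> strategy_space m n c" and "s \<noteq> t"
  obtains i j where "i \<in> {1..m}" and "j \<in> {1..n}" and "s i j \<noteq> t i j"
proof -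
  from \<open>s \<noteq> t\<close> obtain i j where ij: "s i j \<noteq> t i j"
    by (auto simp: fun_eq_iff)
  have "i \<in> {1..m} \<and> j \<in> {1..n}"
  proof (rule ccontr)
    assume "\<not> (i \<in> {1..m} \<and> j \<in> {1..n})"
    with assms(1,2) have "s i j = 0" and "t i j = 0"
      unfolding strategy_space_def by auto
    with ij show False by simp
  qed
  with ij that show thesis by blast
qed

theorem lemma3p2:
  fixes m n :: nat and c d :: "nat \<Rightarrow> real" and rmax rmin :: real
  assumes "0 < m" and "0 < n"
    and "\<forall>i\<in>{1..m}. 0 < c i" and "\<forall>j\<in>{1..n}. 0 < d j"
    and "0 < rmin" and "rmin < rmax"
  shows "strictly_concave_on (strategy_space m n c) (potential m n d rmax rmin)"
  unfolding strictly_concave_on_def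
proof (intro conjI ballI allI impI)
  fix s t and u :: real
  assume "s \<in> strategy_space m n c" "t \<in> strategy_space m n c" "0 \<le> u \<and> u \<le> 1"
  then show "(\<lambda>i j. u * s i j + (1 - u) * t i j) \<in> strategy_space m n c"
    by (simp add: strategy_space_convex)
next
  fix s t and u :: real
  assume "s \<in> strategy_space m n c" "t \<in> strategy_space m n c" "s \<noteq> t"
    and u: "0 < u \<and> u < 1"
  then obtain i j where "i \<in> {1..m}" "j \<in> {1..n}" "s i j \<noteq> t i j"
    using strategy_space_differ by blast
  then show "potential m n d rmax rmin (\<lambda>i j. u * s i j + (1 - u) * t i j)
      > u * potential m n d rmax rmin s + (1 - u) * potential m n d rmax rmin t"
    by (rule potential_strict_concavity_gap[OF assms(4,6)]) (use u in auto)
qed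

end
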